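(* Let $\Omega\subset\mathbb{R}^n$ be a domain and let $u\in C^2(\Omega)$ be a non-positive $H_1$-subharmonic function in $\Omega$. For a constant $t>0$ let $u_t=\max(u,-t)$. Then for any open set $\omega\Subset\Omega$, $$\int_\omega|Du_t|\le C,$$ where $C>0$ depends on $\omega$ and $t$ (and $\Omega$), but is independent of $u$.
   Context: $H_1[u]=\operatorname{div}\big(\frac{Du}{\sqrt{1+|Du|^2}}\big)$. A function $u:\Omega\to[-\infty,\infty)$ is $H_1$-subharmonic if it is upper semicontinuous, $\{u=-\infty\}$ has measure zero, and for every open $\omega\subset\Omega$ and $h\in C^2(\overline\omega)$ with $H_1[h]\le0$ in $\omega$ and $h\ge u$ on $\partial\omega$ one has $h\ge u$ in $\omega$. *)

theory Defs
  imports "HOL-Analysis.Analysis"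
begin

definition pd :: "'n::finite \<Rightarrow> (real^'n \<Rightarrow> real) \<Rightarrow> real^'n \<Rightarrow> real" where
  "pd i f x = frechet_derivative f (at x) (axis i 1)"

definition grad :: "(real^'n::finite \<Rightarrow> real) \<Rightarrow> real^'n \<Rightarrow> real^'n" where
  "grad f x = (\<chi> i. pd i f x)"

text \<open>|Df|(x): norm of the gradient where f is differentiable, 0 elsewhere
  (for Lipschitz f the gradient exists a.e., so this is the a.e. gradient).\<close>
definition grad_norm :: "(real^'n::finite \<Rightarrow> real) \<Rightarrow> real^'n \<Rightarrow> real" where
  "grad_norm f x = (if f differentiable (at x) then norm (grad f x) else 0)"

definition C2_on :: "(real^'n::finite) set \<Rightarrow> (real^'n \<Rightarrow> real) \<Rightarrow> bool" where
  "C2_on U f \<longleftrightarrow> f differentiable_on U \<and> (\<forall>i. (pd i f) differentiable_on U) \<and>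
     (\<forall>i j. continuous_on U (pd j (pd i f)))"

definition C2_closure :: "(real^'n::finite) set \<Rightarrow> (real^'n \<Rightarrow> real) \<Rightarrow> bool" where
  "C2_closure w f \<longleftrightarrow> (\<exists>U. open U \<and> closure w \<subseteq> U \<and> C2_on U f)"

definition H1 :: "(real^'n::finite \<Rightarrow> real) \<Rightarrow> real^'n \<Rightarrow> real" where
  "H1 h x = (\<Sum>i\<in>UNIV. pd i (\<lambda>y. pd i h y / sqrt (1 + (norm (grad h y))\<^sup>2)) x)"

definition H1_subharmonic :: "(real^'n::finite) set \<Rightarrow> (real^'n \<Rightarrow> ereal) \<Rightarrow> bool" where
  "H1_subharmonic \<Omega> u \<longleftrightarrow>
     (\<forall>x\<in>\<Omega>. u x \<noteq> \<infinity>) \<and>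
     (\<forall>x\<in>\<Omega>. \<forall>c. u x < c \<longrightarrow> eventually (\<lambda>y. u y < c) (at x within \<Omega>)) \<and>
     {x\<in>\<Omega>. u x = -\<infinity>} \<in> null_sets lebesgue \<and>
     (\<forall>w h. open w \<and> compact (closure w) \<and> closure w \<subseteq> \<Omega> \<and> C2_closure w h \<and>
        (\<forall>x\<in>w. H1 h x \<le> 0) \<and> (\<forall>x\<in>frontier w. u x \<le> ereal (h x))
        \<longrightarrow> (\<forall>x\<in>w. u x \<le> ereal (h x)))"

end

theory Submission
  imports Defs
begin

text \<open>A \<open>C\<^sup>2\<close> function that is \<open>H1\<close>-subharmonic satisfies \<open>H1 u \<ge> 0\<close> pointwise, by
  comparison with small paraboloid perturbations of \<open>u\<close>. Testing \<open>div (Du / \<surd>(1 + |Du|\<^sup>2)) \<ge> 0\<close> against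
  \<open>\<phi> e\<^sup>u\<close> for a compactly supported \<open>C\<^sup>1\<close> cutoff \<open>\<phi> \<ge> 0\<close> and integrating by parts gives,
  since \<open>u \<le> 0\<close>, \<open>\<integral> \<phi> e\<^sup>u |Du|\<^sup>2 / \<surd>(1 + |Du|\<^sup>2) \<le> \<integral> |D\<phi>|\<close>.
  Where \<open>u \<ge> -t\<close> we have \<open>e\<^sup>u\<^sup>+\<^sup>t \<ge> 1\<close>, and \<open>|Du| \<le> |Du|\<^sup>2 / \<surd>(1 + |Du|\<^sup>2) + 1\<close>, so
  \<open>|D max(u, -t)|\<close> is integrable on every ball where \<open>\<phi>\<close> is bounded below, with a bound that
  does not depend on \<open>u\<close>; finitely many such balls cover \<open>closure \<omega>\<close>.\<close>

lemma pd_eq_derivative: "(f has_derivative f') (at x) \<Longrightarrow> pd i f x = f' (axis i 1)"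
  unfolding pd_def by (metis frechet_derivative_at)

lemma pd_cong_open:
  assumes "open U" "x \<in> U" "\<And>y. y \<in> U \<Longrightarrow> f y = g y"
  shows "pd i f x = pd i g x"
proof -
  have "\<And>f'. (f has_derivative f') (at x) \<longleftrightarrow> (g has_derivative f') (at x)"
    using has_derivative_transform_within_open assms by metis
  then show ?thesis unfolding pd_def frechet_derivative_def by simp
qed

lemma pd_const [simp]: "pd i (\<lambda>_. c) x = 0"
  by (rule pd_eq_derivative) (rule has_derivative_const)

lemma pd_mult:
  assumes "f differentiable (at x)" "g differentiable (at x)"
  shows "pd i (\<lambda>y. f y * g y) x = pd i f x * g x + f x * pd i g x"
proof -
  have "((\<lambda>y. f y * g y) has_derivative
      (\<lambda>v. f x * frechet_derivative g (at x) v + frechet_derivative f (at x) v * g x)) (at x)"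
    using assms by (intro has_derivative_mult) (simp_all add: frechet_derivative_works)
  from pd_eq_derivative[OF this, of i] show ?thesis by (simp add: pd_def)
qed

lemma pd_vanishing_outside:
  assumes "closed K" "\<And>x. x \<notin> K \<Longrightarrow> F x = 0" "x \<notin> K"
  shows "pd i F x = 0"
proof -
  have "pd i F x = pd i (\<lambda>_. 0) x"
    by (rule pd_cong_open[of "- K"]) (use assms in auto)
  then show ?thesis by simp
qed

lemma norm_grad_power2: "(norm (grad f x))\<^sup>2 = (\<Sum>k\<in>UNIV. (pd k f x)\<^sup>2)"
  unfolding grad_def power2_norm_eq_inner inner_vec_def by (simp add: power2_eq_square)

lemma C2_on_differentiable_at: "C2_on U f \<Longrightarrow> open U \<Longrightarrow> x \<in> U \<Longrightarrow> f differentiable (at x)"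
  unfolding C2_on_def using differentiable_on_eq_differentiable_at by blast

lemma C2_on_pd_differentiable_at:
  "C2_on U f \<Longrightarrow> open U \<Longrightarrow> x \<in> U \<Longrightarrow> pd k f differentiable (at x)"
  unfolding C2_on_def using differentiable_on_eq_differentiable_at by blast

lemma C2_on_continuous_on: "C2_on U f \<Longrightarrow> continuous_on U f"
  unfolding C2_on_def by (blast intro: differentiable_imp_continuous_on)

lemma C2_on_continuous_on_pd: "C2_on U f \<Longrightarrow> continuous_on U (pd k f)"
  unfolding C2_on_def by (blast intro: differentiable_imp_continuous_on)

lemma C2_on_continuous_on_pd_pd: "C2_on U f \<Longrightarrow> continuous_on U (pd j (pd k f))"
  unfolding C2_on_def by blast

definition mc_flux :: "(real^'n::finite \<Rightarrow> real) \<Rightarrow> 'n \<Rightarrow> real^'n \<Rightarrow> real" where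
  "mc_flux u i x = pd i u x / sqrt (1 + (norm (grad u x))\<^sup>2)"

lemma H1_eq_sum_pd_mc_flux: "H1 u x = (\<Sum>i\<in>UNIV. pd i (mc_flux u i) x)"
  unfolding H1_def mc_flux_def[abs_def] ..

lemma one_plus_sum_squares_pos: "1 + (\<Sum>k\<in>A. (a k)\<^sup>2) > (0::real)"
  by (simp add: add_pos_nonneg sum_nonneg)

lemma has_derivative_mc_flux:
  assumes "C2_on U u" "open U" "x \<in> U"
  defines "D k \<equiv> frechet_derivative (pd k u) (at x)"
    and "W \<equiv> sqrt (1 + (\<Sum>k\<in>UNIV. (pd k u x)\<^sup>2))"
  shows "(mc_flux u i has_derivative
      (\<lambda>v. D i v / W - pd i u x * (\<Sum>k\<in>UNIV. pd k u x * D k v) / W ^ 3)) (at x)"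
proof -
  have D: "(pd k u has_derivative D k) (at x)" for k
    unfolding D_def using C2_on_pd_differentiable_at[OF assms(1-3)] frechet_derivative_works by blast
  note pos = one_plus_sum_squares_pos[of "\<lambda>k. pd k u x" UNIV]
  then have W: "W > 0" unfolding W_def by simp
  have "((\<lambda>y. pd i u y / sqrt (1 + (\<Sum>k\<in>UNIV. (pd k u y)\<^sup>2))) has_derivative
     (\<lambda>v. (D i v * W - pd i u x * ((\<Sum>k\<in>UNIV. of_nat 2 * D k v * (pd k u x) ^ (2 - 1))
        * (inverse W / 2))) / (W * W))) (at x)"
    unfolding W_def
    by (rule has_derivative_divide'[OF D has_derivative_real_sqrt[THEN has_derivative_eq_rhs]])
      (use pos in \<open>auto intro!: derivative_eq_intros D\<close>)
  moreover have "(D i v * W - pd i u x * ((\<Sum>k\<in>UNIV. of_nat 2 * D k v * (pd k u x) ^ (2 - 1))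
        * (inverse W / 2))) / (W * W)
      = D i v / W - pd i u x * (\<Sum>k\<in>UNIV. pd k u x * D k v) / W ^ 3" for v
    using W by (simp add: field_simps power3_eq_cube sum_distrib_left sum_divide_distrib mult_ac)
  ultimately show ?thesis
    unfolding mc_flux_def[abs_def] norm_grad_power2 by simp
qed

lemma pd_mc_flux:
  assumes "C2_on U u" "open U" "x \<in> U"
  shows "pd j (mc_flux u i) x = pd j (pd i u) x / sqrt (1 + (norm (grad u x))\<^sup>2)
     - pd i u x * (\<Sum>k\<in>UNIV. pd k u x * pd j (pd k u) x) / sqrt (1 + (norm (grad u x))\<^sup>2) ^ 3"
  using pd_eq_derivative[OF has_derivative_mc_flux[OF assms], of j]
  by (simp add: pd_def norm_grad_power2)

lemma mc_flux_differentiable_at: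
  "C2_on U u \<Longrightarrow> open U \<Longrightarrow> x \<in> U \<Longrightarrow> mc_flux u i differentiable (at x)"
  using has_derivative_mc_flux differentiableI by blast

lemma continuous_on_pd_mc_flux:
  assumes "C2_on U u" "open U"
  shows "continuous_on U (pd j (mc_flux u i))"
proof -
  have "continuous_on U (\<lambda>x. pd j (pd i u) x / sqrt (1 + (\<Sum>k\<in>UNIV. (pd k u x)\<^sup>2))
     - pd i u x * (\<Sum>k\<in>UNIV. pd k u x * pd j (pd k u) x) / sqrt (1 + (\<Sum>k\<in>UNIV. (pd k u x)\<^sup>2)) ^ 3)"
    using C2_on_continuous_on_pd[OF assms(1)] C2_on_continuous_on_pd_pd[OF assms(1)]
    by (intro continuous_intros) (auto simp: add_nonneg_eq_0_iff sum_nonneg)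
  then show ?thesis
    by (rule continuous_on_cong[THEN iffD1, rotated 2]) (simp_all add: pd_mc_flux[OF assms] norm_grad_power2)
qed

text \<open>\<open>p\<close> stands for the gradient and \<open>q i k\<close> for \<open>\<partial>\<^sub>i\<partial>\<^sub>k u\<close>.\<close>
definition H1_jet :: "('n::finite \<Rightarrow> real) \<Rightarrow> ('n \<Rightarrow> 'n \<Rightarrow> real) \<Rightarrow> real" where
  "H1_jet p q = (\<Sum>i\<in>UNIV. q i i / sqrt (1 + (\<Sum>k\<in>UNIV. (p k)\<^sup>2))
       - p i * (\<Sum>k\<in>UNIV. p k * q i k) / sqrt (1 + (\<Sum>k\<in>UNIV. (p k)\<^sup>2)) ^ 3)"

lemma H1_eq_H1_jet:
  assumes "C2_on U u" "open U" "x \<in> U"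
  shows "H1 u x = H1_jet (\<lambda>k. pd k u x) (\<lambda>i k. pd i (pd k u) x)"
  unfolding H1_eq_sum_pd_mc_flux H1_jet_def pd_mc_flux[OF assms] norm_grad_power2 ..

lemma isCont_H1_jet:
  fixes P :: "'n::finite \<Rightarrow> 'a::metric_space \<Rightarrow> real"
  assumes "\<And>k. isCont (P k) a" "\<And>i k. isCont (Q i k) a"
  shows "isCont (\<lambda>z. H1_jet (\<lambda>k. P k z) (\<lambda>i k. Q i k z)) a"
  unfolding H1_jet_def using one_plus_sum_squares_pos[of "\<lambda>k. P k a" UNIV]
  by (intro continuous_intros assms) auto

section \<open>Subharmonic functions are subsolutions\<close>

lemma C2_on_add_quadratic:
  fixes u :: "real^'n::finite \<Rightarrow> real" and x0 :: "real^'n" and e d :: real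
  assumes u: "C2_on U u" and U: "open U"
  defines "h \<equiv> \<lambda>y. u y + e * ((y - x0) \<bullet> (y - x0) - d\<^sup>2)"
  shows "C2_on U h"
    and "\<And>y. y \<in> U \<Longrightarrow> pd k h y = pd k u y + 2 * e * (y $ k - x0 $ k)"
    and "\<And>y. y \<in> U \<Longrightarrow> pd j (pd k h) y = pd j (pd k u) y + (if j = k then 2 * e else 0)"
proof -
  have du: "(u has_derivative frechet_derivative u (at y)) (at y)" if "y \<in> U" for y
    using C2_on_differentiable_at[OF u U that] frechet_derivative_works by blast
  have dh: "(h has_derivative (\<lambda>v. frechet_derivative u (at y) v + e * (2 * ((y - x0) \<bullet> v)))) (at y)"
    if "y \<in> U" for y
    unfolding h_def by (auto intro!: derivative_eq_intros du[OF that] simp: inner_commute)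
  show pd_h: "pd k h y = pd k u y + 2 * e * (y $ k - x0 $ k)" if "y \<in> U" for k y
    using pd_eq_derivative[OF dh[OF that]] pd_eq_derivative[OF du[OF that]] by (simp add: inner_axis)
  have dpd_h: "(pd k h has_derivative
      (\<lambda>v. frechet_derivative (pd k u) (at y) v + 2 * e * v $ k)) (at y)" if "y \<in> U" for k y
  proof (rule has_derivative_transform_within_open[OF _ U that])
    show "((\<lambda>y. pd k u y + 2 * e * (y $ k - x0 $ k)) has_derivative
        (\<lambda>v. frechet_derivative (pd k u) (at y) v + 2 * e * v $ k)) (at y)"
      using C2_on_pd_differentiable_at[OF u U that] frechet_derivative_works
      by (auto intro!: derivative_eq_intros bounded_linear_imp_has_derivative bounded_linear_vec_nth)
  qed (simp add: pd_h)
  show pd_pd_h: "pd j (pd k h) y = pd j (pd k u) y + (if j = k then 2 * e else 0)"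
    if "y \<in> U" for j k y
    using pd_eq_derivative[OF dpd_h[OF that], of j] by (simp add: pd_def axis_def)
  show "C2_on U h"
    unfolding C2_on_def differentiable_on_eq_differentiable_at[OF U]
  proof (intro conjI allI ballI)
    show "h differentiable (at y)" if "y \<in> U" for y using dh[OF that] by (rule differentiableI)
    show "pd k h differentiable (at y)" if "y \<in> U" for k y using dpd_h[OF that] by (rule differentiableI)
    have "continuous_on U (\<lambda>y. pd j (pd k u) y + (if j = k then 2 * e else 0))" for j k
      using u by (intro continuous_intros C2_on_continuous_on_pd_pd)
    then show "continuous_on U (pd j (pd k h))" for j k
      by (rule continuous_on_cong[THEN iffD1, rotated 2]) (auto simp: pd_pd_h)
  qed
qed

lemma eventually_nhds_H1_jet_add_quadratic_neg:
  fixes u :: "real^'n::finite \<Rightarrow> real"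
  assumes U: "open U" and u: "C2_on U u" and x0: "x0 \<in> U" and neg: "H1 u x0 < 0"
  shows "\<forall>\<^sub>F (y, e) in nhds (x0, 0). H1_jet (\<lambda>k. pd k u y + 2 * e * (y $ k - x0 $ k))
      (\<lambda>j k. pd j (pd k u) y + (if j = k then 2 * e else 0)) < 0"
proof -
  define \<Gamma> where "\<Gamma> p = H1_jet (\<lambda>k. pd k u (fst p) + 2 * snd p * (fst p $ k - x0 $ k))
      (\<lambda>j k. pd j (pd k u) (fst p) + (if j = k then 2 * snd p else 0))" for p :: "(real^'n) \<times> real"
  have "\<Gamma> (x0, 0) = H1 u x0"
    unfolding \<Gamma>_def H1_eq_H1_jet[OF u U x0] by (simp cong: if_cong)
  moreover have "isCont \<Gamma> (x0, 0)"
  proof -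
    have "isCont (pd k u) x0" "isCont (pd j (pd k u)) x0" for j k
      using C2_on_continuous_on_pd[OF u] C2_on_continuous_on_pd_pd[OF u] U x0
      by (simp_all add: continuous_on_eq_continuous_at)
    moreover have "isCont (\<lambda>p. if j = k then 2 * snd p else 0) (x0, 0::real)" for j k :: 'n
      by (cases "j = k") (auto intro!: continuous_intros)
    ultimately show ?thesis
      unfolding \<Gamma>_def by (intro isCont_H1_jet continuous_intros isCont_o2[where f=fst]) auto
  qed
  ultimately have "\<forall>\<^sub>F p in nhds (x0, 0). \<Gamma> p < 0"
    using neg by (intro order_tendstoD[of \<Gamma> "H1 u x0"]) (metis isCont_def tendsto_at_iff_tendsto_nhds, simp)
  then show ?thesis by (simp add: \<Gamma>_def case_prod_beta')
qed

text \<open>If \<open>H1 u x0 < 0\<close>, then for small \<open>d\<close> the paraboloid perturbation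
  \<open>h = u + d (|y - x0|\<^sup>2 - d\<^sup>2)\<close> still has \<open>H1 h < 0\<close> on \<open>ball x0 d\<close> and agrees with \<open>u\<close> on
  its boundary, so subharmonicity forces \<open>u \<le> h\<close>, contradicting \<open>h x0 = u x0 - d\<^sup>3\<close>.\<close>
lemma H1_nonneg_if_H1_subharmonic:
  fixes u :: "real^'n::finite \<Rightarrow> real"
  assumes U: "open U" and u: "C2_on U u" and sub: "H1_subharmonic U (\<lambda>x. ereal (u x))"
    and x0: "x0 \<in> U"
  shows "H1 u x0 \<ge> 0"
proof (rule ccontr)
  assume "\<not> H1 u x0 \<ge> 0"
  then obtain r where r: "r > 0" "\<And>y e. dist (y, e) (x0, 0) < r \<Longrightarrow>
      H1_jet (\<lambda>k. pd k u y + 2 * e * (y $ k - x0 $ k))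
        (\<lambda>j k. pd j (pd k u) y + (if j = k then 2 * e else 0)) < 0"
    using eventually_nhds_H1_jet_add_quadratic_neg[OF U u x0]
    unfolding eventually_nhds_metric by (force simp: dist_commute)
  obtain r0 where r0: "r0 > 0" "cball x0 r0 \<subseteq> U" using U x0 open_contains_cball by blast
  define d where "d = min (r / 3) r0"
  have d: "d > 0" "d < r / 2" and ball_U: "cball x0 d \<subseteq> U" using r r0 by (auto simp: d_def)
  define h where "h y = u y + d * ((y - x0) \<bullet> (y - x0) - d\<^sup>2)" for y
  have h: "C2_on U h"
    "\<And>y k. y \<in> U \<Longrightarrow> pd k h y = pd k u y + 2 * d * (y $ k - x0 $ k)"
    "\<And>y j k. y \<in> U \<Longrightarrow> pd j (pd k h) y = pd j (pd k u) y + (if j = k then 2 * d else 0)"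
    unfolding h_def[abs_def] using C2_on_add_quadratic[OF u U] by blast+
  have "H1 h y \<le> 0" if y: "y \<in> ball x0 d" for y
  proof -
    have yU: "y \<in> U" using y ball_U by auto
    have "dist (y, d) (x0, 0) < r"
      unfolding dist_Pair_Pair
      using y d by (intro sqrt_sum_squares_half_less) (auto simp: dist_commute dist_real_def)
    moreover have "H1 h y = H1_jet (\<lambda>k. pd k u y + 2 * d * (y $ k - x0 $ k))
        (\<lambda>j k. pd j (pd k u) y + (if j = k then 2 * d else 0))"
      using H1_eq_H1_jet[OF h(1) U yU] by (simp only: h(2)[OF yU] h(3)[OF yU])
    ultimately show ?thesis using r(2) by fastforce
  qed
  moreover have "u y \<le> h y" if "y \<in> frontier (ball x0 d)" for y
  proof -
    have "norm (y - x0) = d" using that d by (simp add: dist_norm norm_minus_commute)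
    then show ?thesis by (simp add: h_def power2_norm_eq_inner[symmetric])
  qed
  moreover have "C2_closure (ball x0 d) h"
    unfolding C2_closure_def using U ball_U h(1) d by auto
  ultimately have "\<forall>y\<in>ball x0 d. ereal (u y) \<le> ereal (h y)"
    using sub ball_U d unfolding H1_subharmonic_def
    by (metis (no_types, lifting) closure_ball compact_cball open_ball ereal_less_eq(3))
  then have "u x0 \<le> h x0" using d by auto
  then show False using d by (simp add: h_def) (metis mult_pos_pos not_le zero_less_power)
qed

section \<open>Integration by parts\<close>

lemma continuous_on_vanishing_outside:
  assumes U: "open U" and K: "closed K" "K \<subseteq> U"
    and f: "continuous_on U f" and f0: "\<And>x. x \<notin> K \<Longrightarrow> f x = 0"
  shows "continuous_on UNIV f"
proof -
  have "continuous_on (- K) f"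
    using continuous_on_const[of "- K" 0] by (rule continuous_on_cong[THEN iffD1, rotated 2]) (simp_all add: f0)
  with f have "continuous_on (U \<union> - K) f" using U K by (intro continuous_on_open_Un) auto
  moreover have "U \<union> - K = UNIV" using K by auto
  ultimately show ?thesis by simp
qed

lemma differentiable_vanishing_outside:
  assumes U: "open U" and K: "closed K" "K \<subseteq> U"
    and f: "\<And>x. x \<in> U \<Longrightarrow> f differentiable (at x)" and f0: "\<And>x. x \<notin> K \<Longrightarrow> f x = 0"
  shows "f differentiable (at x)"
proof (cases "x \<in> U")
  case False
  then have "x \<in> - K" using K by auto
  then have "(f has_derivative (\<lambda>_. 0)) (at x)"
    using K by (intro has_derivative_transform_within_open[OF has_derivative_const, of "- K"])
      (auto simp: f0)
  then show ?thesis by (rule differentiableI)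
qed (rule f)

lemma bounded_vanishing_outside:
  fixes f :: "'a::topological_space \<Rightarrow> real"
  assumes "continuous_on UNIV f" "compact K" "\<And>x. x \<notin> K \<Longrightarrow> f x = 0"
  obtains M where "\<And>x. \<bar>f x\<bar> \<le> M"
proof -
  have "compact (f ` K)"
    using assms by (meson compact_continuous_image continuous_on_subset subset_UNIV)
  then obtain M where "\<forall>y\<in>f ` K. \<bar>y\<bar> \<le> M"
    using compact_imp_bounded bounded_real by blast
  then have "\<bar>f x\<bar> \<le> max M 0" for x
    using assms(3) by (cases "x \<in> K") fastforce+
  then show ?thesis using that by blast
qed

lemma has_real_derivative_along_line:
  assumes "(F has_derivative F') (at (x + s *\<^sub>R e))"
  shows "((\<lambda>s. F (x + s *\<^sub>R e)) has_real_derivative F' e) (at s)"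
proof -
  have "((\<lambda>s. x + s *\<^sub>R e) has_derivative (\<lambda>s. s *\<^sub>R e)) (at s)"
    by (auto intro!: derivative_eq_intros)
  from has_derivative_compose[OF this assms]
  have "((\<lambda>s. F (x + s *\<^sub>R e)) has_derivative (\<lambda>s. F' (s *\<^sub>R e))) (at s)" .
  moreover have "(\<lambda>s. F' (s *\<^sub>R e)) = (*) (F' e)"
    using linear.scaleR[OF has_derivative_linear[OF assms]] by (auto simp: fun_eq_iff)
  ultimately show ?thesis unfolding has_field_derivative_def by simp
qed

lemma tendsto_difference_quotient_pd:
  assumes "F differentiable (at x)" "filterlim h (at 0) F'"
  shows "((\<lambda>n. (F (x + h n *\<^sub>R axis i 1) - F x) / h n) \<longlongrightarrow> pd i F x) F'"
proof -
  have "((\<lambda>s. F (x + s *\<^sub>R axis i 1)) has_real_derivative pd i F x) (at 0)"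
    using has_real_derivative_along_line[of F _ x 0] assms(1) frechet_derivative_works
    by (auto simp: pd_def)
  then have "((\<lambda>s. (F (x + s *\<^sub>R axis i 1) - F x) / s) \<longlongrightarrow> pd i F x) (at 0)"
    by (simp add: DERIV_def)
  from filterlim_compose[OF this assms(2)] show ?thesis by (simp add: o_def)
qed

lemma abs_difference_quotient_le:
  assumes "\<And>y. F differentiable (at y)" "\<And>y. \<bar>pd i F y\<bar> \<le> M" "h > 0"
  shows "\<bar>(F (x + h *\<^sub>R axis i 1) - F x) / h\<bar> \<le> M"
proof -
  have "((\<lambda>s. F (x + s *\<^sub>R axis i 1)) has_real_derivative pd i F (x + s *\<^sub>R axis i 1)) (at s)" for s
    using has_real_derivative_along_line assms(1) frechet_derivative_works by (metis pd_def)
  from MVT2[OF \<open>h > 0\<close> this] obtain z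
    where "F (x + h *\<^sub>R axis i 1) - F (x + 0 *\<^sub>R axis i 1) = (h - 0) * pd i F (x + z *\<^sub>R axis i 1)"
    by blast
  then show ?thesis using assms(2,3) by simp
qed

lemma integral_translate_lborel:
  fixes F :: "'a::euclidean_space \<Rightarrow> real"
  assumes F: "integrable lborel F"
  shows "integrable lborel (\<lambda>x. F (x + a))" "integral\<^sup>L lborel (\<lambda>x. F (x + a)) = integral\<^sup>L lborel F"
proof -
  have m: "F \<in> borel_measurable borel" using borel_measurable_integrable[OF F] by simp
  have "integrable (distr lborel borel ((+) a)) F" using F by (simp add: lborel_distr_plus)
  then show "integrable lborel (\<lambda>x. F (x + a))"
    by (subst (asm) integrable_distr_eq) (use m in \<open>auto simp: add.commute\<close>)
  have "integral\<^sup>L lborel F = integral\<^sup>L (distr lborel borel ((+) a)) F"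
    by (simp add: lborel_distr_plus)
  also have "\<dots> = integral\<^sup>L lborel (\<lambda>x. F (a + x))"
    by (rule integral_distr) (use m in auto)
  finally show "integral\<^sup>L lborel (\<lambda>x. F (x + a)) = integral\<^sup>L lborel F" by (simp add: add.commute)
qed

lemma abs_difference_quotient_le_indicator:
  fixes F :: "real^'n::finite \<Rightarrow> real"
  assumes dF: "\<And>y. F differentiable (at y)" and M: "\<And>y. \<bar>pd i F y\<bar> \<le> M"
    and R: "K \<subseteq> ball 0 R" and F0: "\<And>y. y \<notin> K \<Longrightarrow> F y = 0" and h: "0 < h" "h \<le> 1"
  shows "\<bar>(F (x + h *\<^sub>R axis i 1) - F x) / h\<bar> \<le> M * indicator (cball 0 (R + 1)) x"
proof (cases "x \<in> cball 0 (R + 1)")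
  case True
  then show ?thesis using abs_difference_quotient_le[OF dF M h(1)] by simp
next
  case False
  then have "norm x > R + 1" by simp
  moreover have "norm x \<le> norm (x + h *\<^sub>R axis i 1) + h"
    using norm_triangle_ineq4[of "x + h *\<^sub>R axis i 1" "h *\<^sub>R axis i 1"] h(1) by simp
  ultimately have "x \<notin> ball 0 R" "x + h *\<^sub>R axis i 1 \<notin> ball 0 R"
    using h(2) by auto
  then have "F x = 0" "F (x + h *\<^sub>R axis i 1) = 0" using R F0 by blast+
  then show ?thesis using False by simp
qed

text \<open>Dominated convergence for the difference quotients along \<open>axis i 1\<close>, whose integrals
  vanish by translation invariance of Lebesgue measure.\<close>
lemma integral_pd_vanishing_outside:
  fixes F :: "real^'n::finite \<Rightarrow> real"
  assumes K: "compact K" and F0: "\<And>x. x \<notin> K \<Longrightarrow> F x = 0"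
    and dF: "\<And>x. F differentiable (at x)" and cF: "continuous_on UNIV (pd i F)"
  shows "integrable lborel (pd i F)" "integral\<^sup>L lborel (pd i F) = 0"
proof -
  define h :: "nat \<Rightarrow> real" where "h n = 1 / Suc n" for n
  define D where "D n x = (F (x + h n *\<^sub>R axis i 1) - F x) / h n" for n x
  have h: "h n > 0" "h n \<le> 1" for n by (auto simp: h_def field_simps)
  have "h \<longlonglongrightarrow> 0"
    unfolding h_def using LIMSEQ_Suc[OF lim_const_over_n[of 1]] by simp
  then have h_at_0: "filterlim h (at 0) sequentially"
    using h(1) by (auto simp: filterlim_at less_imp_neq[symmetric])
  have F: "continuous_on UNIV F"
    using dF by (simp add: continuous_at_imp_continuous_on differentiable_imp_continuous_within)
  have "(\<lambda>x. indicator K x *\<^sub>R F x) = F"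
    using F0 by (force simp: indicator_def)
  then have F_int: "integrable lborel F"
    using borel_integrable_compact[OF K continuous_on_subset[OF F]] by simp
  have mD: "D n \<in> borel_measurable lborel" for n
  proof -
    have "continuous_on UNIV (D n)" unfolding D_def
      by (intro continuous_intros continuous_on_compose2[OF F]) (use h(1)[of n] in auto)
    then show ?thesis by (simp add: borel_measurable_continuous_onI)
  qed
  have "pd i F x = 0" if "x \<notin> K" for x
    using pd_vanishing_outside[of K F x] compact_imp_closed[OF K] F0 that by blast
  then obtain M where M: "\<And>x. \<bar>pd i F x\<bar> \<le> M"
    using bounded_vanishing_outside[OF cF K] by blast
  obtain R where R: "K \<subseteq> ball 0 R"
    using bounded_subset_ballD[OF compact_imp_bounded[OF K]] by blast
  define w where "w x = M * indicator (cball 0 (R + 1)) x" for x :: "real^'n"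
  have w_int: "integrable lborel w"
    unfolding w_def using emeasure_compact_finite[OF compact_cball, of 0 "R + 1"]
    by (intro integrable_mult_right integrable_real_indicator) (auto simp: less_top)
  have bound: "AE x in lborel. norm (D n x) \<le> w x" for n
    unfolding D_def w_def using abs_difference_quotient_le_indicator[OF dF M R F0 h] by simp
  have lim: "AE x in lborel. (\<lambda>n. D n x) \<longlonglongrightarrow> pd i F x"
    unfolding D_def using tendsto_difference_quotient_pd[OF dF h_at_0] by simp
  have mF: "pd i F \<in> borel_measurable lborel"
    using cF by (simp add: borel_measurable_continuous_onI)
  show "integrable lborel (pd i F)"
    by (rule integrable_dominated_convergence[OF mF mD w_int lim bound])
  have "integral\<^sup>L lborel (D n) = 0" for n
    using integral_translate_lborel[OF F_int, of "h n *\<^sub>R axis i 1"] F_int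
    by (simp add: D_def[abs_def] integral_divide_zero)
  moreover have "(\<lambda>n. integral\<^sup>L lborel (D n)) \<longlonglongrightarrow> integral\<^sup>L lborel (pd i F)"
    by (rule integral_dominated_convergence[OF mF mD w_int lim bound])
  ultimately have "(\<lambda>n. 0) \<longlonglongrightarrow> integral\<^sup>L lborel (pd i F)" by simp
  then show "integral\<^sup>L lborel (pd i F) = 0" by (simp add: LIMSEQ_const_iff)
qed

section \<open>The weighted energy estimate\<close>

lemma mc_flux_vec: "(\<chi> i. mc_flux u i x) = grad u x /\<^sub>R sqrt (1 + (norm (grad u x))\<^sup>2)"
  by (simp add: vec_eq_iff grad_def mc_flux_def divide_inverse_commute)

lemma norm_mc_flux_vec_le: "norm (\<chi> i. mc_flux u i x) \<le> 1"
proof -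
  have "norm (grad u x) \<le> sqrt (1 + (norm (grad u x))\<^sup>2)" by (rule real_le_rsqrt) simp
  moreover have "sqrt (1 + (norm (grad u x))\<^sup>2) > 0" by (simp add: add_pos_nonneg)
  ultimately show ?thesis unfolding mc_flux_vec by (simp add: field_simps)
qed

lemma sum_pd_mult_mc_flux: "(\<Sum>i\<in>UNIV. pd i u x * mc_flux u i x)
    = (norm (grad u x))\<^sup>2 / sqrt (1 + (norm (grad u x))\<^sup>2)"
  unfolding mc_flux_def norm_grad_power2 by (simp add: sum_divide_distrib power2_eq_square)

lemma sum_pd_mult_mc_flux_ge:
  assumes "norm (grad \<phi> x) \<le> \<Lambda>"
  shows "(\<Sum>i\<in>UNIV. pd i \<phi> x * mc_flux u i x) \<ge> - \<Lambda>"
proof -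
  have "(\<Sum>i\<in>UNIV. pd i \<phi> x * mc_flux u i x) = grad \<phi> x \<bullet> (\<chi> i. mc_flux u i x)"
    by (simp add: inner_vec_def grad_def)
  moreover have "\<bar>grad \<phi> x \<bullet> (\<chi> i. mc_flux u i x)\<bar> \<le> \<Lambda>"
    using Cauchy_Schwarz_ineq2[of "grad \<phi> x" "\<chi> i. mc_flux u i x"] norm_mc_flux_vec_le[of u x] assms
    by (smt (verit) mult_left_le norm_ge_zero)
  ultimately show ?thesis by linarith
qed

text \<open>Extended by zero outside \<open>U\<close>, where \<open>u\<close> need not be differentiable.\<close>
definition weighted_mc_flux ::
    "(real^'n::finite) set \<Rightarrow> (real^'n \<Rightarrow> real) \<Rightarrow> (real^'n \<Rightarrow> real) \<Rightarrow> 'n \<Rightarrow> real^'n \<Rightarrow> real" where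
  "weighted_mc_flux U \<phi> u i x = (if x \<in> U then \<phi> x * exp (u x) * mc_flux u i x else 0)"

definition mc_energy :: "(real^'n::finite \<Rightarrow> real) \<Rightarrow> (real^'n \<Rightarrow> real) \<Rightarrow> real^'n \<Rightarrow> real" where
  "mc_energy \<phi> u x = \<phi> x * exp (u x) * ((norm (grad u x))\<^sup>2 / sqrt (1 + (norm (grad u x))\<^sup>2))"

lemma pd_weighted_mc_flux:
  assumes U: "open U" and u: "C2_on U u" and x: "x \<in> U" and \<phi>: "\<phi> differentiable (at x)"
  shows "pd i (weighted_mc_flux U \<phi> u i) x
    = exp (u x) * (pd i \<phi> x * mc_flux u i x)
      + \<phi> x * exp (u x) * (pd i u x * mc_flux u i x + pd i (mc_flux u i) x)"
proof -
  have "((\<lambda>y. \<phi> y * exp (u y)) has_derivative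
      (\<lambda>v. frechet_derivative \<phi> (at x) v * exp (u x)
         + \<phi> x * (frechet_derivative u (at x) v * exp (u x)))) (at x)"
    using \<phi> C2_on_differentiable_at[OF u U x]
    by (auto intro!: derivative_eq_intros simp: frechet_derivative_works algebra_simps)
  then have "pd i (\<lambda>y. \<phi> y * exp (u y)) x = pd i \<phi> x * exp (u x) + \<phi> x * (pd i u x * exp (u x))"
    and "(\<lambda>y. \<phi> y * exp (u y)) differentiable (at x)"
    using pd_eq_derivative[of _ _ x i] by (auto simp: pd_def intro: differentiableI)
  moreover have "pd i (weighted_mc_flux U \<phi> u i) x = pd i (\<lambda>y. \<phi> y * exp (u y) * mc_flux u i y) x"
    by (rule pd_cong_open[OF U x]) (simp add: weighted_mc_flux_def)
  ultimately show ?thesis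
    using pd_mult[of "\<lambda>y. \<phi> y * exp (u y)" x "mc_flux u i" i] mc_flux_differentiable_at[OF u U x]
    by (simp add: algebra_simps)
qed

lemma sum_pd_weighted_mc_flux:
  assumes "open U" "C2_on U u" "x \<in> U" "\<phi> differentiable (at x)"
  shows "(\<Sum>i\<in>UNIV. pd i (weighted_mc_flux U \<phi> u i) x)
    = exp (u x) * (\<Sum>i\<in>UNIV. pd i \<phi> x * mc_flux u i x) + \<phi> x * exp (u x) * H1 u x + mc_energy \<phi> u x"
  unfolding pd_weighted_mc_flux[OF assms] H1_eq_sum_pd_mc_flux mc_energy_def
    sum_pd_mult_mc_flux[symmetric]
  by (simp add: sum.distrib sum_distrib_left algebra_simps)

lemma weighted_mc_flux_differentiable_at:
  assumes U: "open U" and u: "C2_on U u" and x: "x \<in> U" and \<phi>: "\<phi> differentiable (at x)"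
  shows "weighted_mc_flux U \<phi> u i differentiable (at x)"
proof -
  have "(\<lambda>y. \<phi> y * exp (u y) * mc_flux u i y) differentiable (at x)"
    using \<phi> C2_on_differentiable_at[OF u U x] mc_flux_differentiable_at[OF u U x]
    by (intro differentiable_mult differentiable_compose[of exp u, unfolded o_def])
      (auto intro: field_differentiable_imp_differentiable field_differentiable_within_exp)
  then obtain D where "((\<lambda>y. \<phi> y * exp (u y) * mc_flux u i y) has_derivative D) (at x)"
    unfolding differentiable_def by blast
  then have "(weighted_mc_flux U \<phi> u i has_derivative D) (at x)"
    by (rule has_derivative_transform_within_open[OF _ U x]) (simp add: weighted_mc_flux_def)
  then show ?thesis by (rule differentiableI)
qed

lemma continuous_on_pd_weighted_mc_flux:
  assumes U: "open U" and u: "C2_on U u"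
    and \<phi>: "\<And>x. \<phi> differentiable (at x)" "continuous_on UNIV (pd i \<phi>)"
  shows "continuous_on U (pd i (weighted_mc_flux U \<phi> u i))"
proof -
  have "continuous_on U \<phi>" "continuous_on U (mc_flux u i)"
    using \<phi>(1) mc_flux_differentiable_at[OF u U]
    by (simp_all add: continuous_at_imp_continuous_on differentiable_imp_continuous_within)
  then have "continuous_on U (\<lambda>x. exp (u x) * (pd i \<phi> x * mc_flux u i x)
      + \<phi> x * exp (u x) * (pd i u x * mc_flux u i x + pd i (mc_flux u i) x))"
    using continuous_on_subset[OF \<phi>(2)] C2_on_continuous_on[OF u] C2_on_continuous_on_pd[OF u]
      continuous_on_pd_mc_flux[OF u U]
    by (intro continuous_intros) auto
  then show ?thesis
    by (rule continuous_on_cong[THEN iffD1, rotated 2])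
      (simp_all add: pd_weighted_mc_flux[OF U u _ \<phi>(1)])
qed

lemma integral_pd_weighted_mc_flux:
  fixes u \<phi> :: "real^'n::finite \<Rightarrow> real"
  assumes U: "open U" and u: "C2_on U u" and K: "compact K" "K \<subseteq> U"
    and \<phi>0: "\<And>x. x \<notin> K \<Longrightarrow> \<phi> x = 0"
    and \<phi>: "\<And>x. \<phi> differentiable (at x)" "\<And>i. continuous_on UNIV (pd i \<phi>)"
  shows "integrable lborel (pd i (weighted_mc_flux U \<phi> u i))"
    "integral\<^sup>L lborel (pd i (weighted_mc_flux U \<phi> u i)) = 0"
proof -
  let ?F = "weighted_mc_flux U \<phi> u i"
  have closedK: "closed K" using K(1) by (rule compact_imp_closed)
  have F0: "\<And>x. x \<notin> K \<Longrightarrow> ?F x = 0" by (simp add: weighted_mc_flux_def \<phi>0)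
  have "?F differentiable (at x)" for x
    by (rule differentiable_vanishing_outside[where f = ?F, OF U closedK K(2)
          weighted_mc_flux_differentiable_at[OF U u _ \<phi>(1)] F0])
  moreover have "continuous_on UNIV (pd i ?F)"
    by (rule continuous_on_vanishing_outside[where f = "pd i ?F", OF U closedK K(2)
          continuous_on_pd_weighted_mc_flux[OF U u \<phi>] pd_vanishing_outside[OF closedK F0]])
  ultimately show "integrable lborel (pd i ?F)" "integral\<^sup>L lborel (pd i ?F) = 0"
    using integral_pd_vanishing_outside[where F = ?F and i = i, OF K(1) F0] by auto
qed

lemma continuous_on_mc_energy:
  assumes "continuous_on U \<phi>" "C2_on U u"
  shows "continuous_on U (mc_energy \<phi> u)"
  unfolding mc_energy_def[abs_def] norm_grad_power2
  using assms C2_on_continuous_on[OF assms(2)] C2_on_continuous_on_pd[OF assms(2)]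
  by (intro continuous_intros) (auto simp: add_nonneg_eq_0_iff sum_nonneg)

text \<open>Pointwise, the divergence of the weighted flux dominates the energy up to the term where
  the derivative falls on \<open>\<phi>\<close>: the \<open>H1 u\<close> term is nonnegative and \<open>e\<^sup>u \<le> 1\<close>.\<close>
lemma mc_energy_le_sum_pd_weighted_mc_flux:
  fixes u \<phi> :: "real^'n::finite \<Rightarrow> real"
  assumes U: "open U" and u: "C2_on U u" and u_le: "\<And>x. x \<in> U \<Longrightarrow> u x \<le> 0"
    and H1: "\<And>x. x \<in> U \<Longrightarrow> H1 u x \<ge> 0"
    and K: "closed K" "K \<subseteq> U" and \<phi>0: "\<And>x. x \<notin> K \<Longrightarrow> \<phi> x = 0" and \<phi>_nonneg: "\<And>x. \<phi> x \<ge> 0"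
    and \<phi>: "\<And>x. \<phi> differentiable (at x)" and grad_\<phi>: "\<And>x. norm (grad \<phi> x) \<le> \<Lambda>"
  shows "mc_energy \<phi> u x \<le> (\<Sum>i\<in>UNIV. pd i (weighted_mc_flux U \<phi> u i) x) + \<Lambda> * indicator K x"
proof (cases "x \<in> U")
  case True
  have "exp (u x) * (\<Sum>i\<in>UNIV. pd i \<phi> x * mc_flux u i x) \<ge> - \<Lambda> * indicator K x"
  proof (cases "x \<in> K")
    case True
    have "exp (u x) * (- \<Lambda>) \<le> exp (u x) * (\<Sum>i\<in>UNIV. pd i \<phi> x * mc_flux u i x)"
      using sum_pd_mult_mc_flux_ge[OF grad_\<phi>] by (intro mult_left_mono) auto
    moreover have "exp (u x) * \<Lambda> \<le> \<Lambda>"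
      using u_le \<open>x \<in> U\<close> order_trans[OF norm_ge_zero grad_\<phi>]
      by (intro mult_left_le_one_le) auto
    ultimately show ?thesis using True by simp
  next
    case False
    then show ?thesis using pd_vanishing_outside[OF K(1) \<phi>0] by simp
  qed
  moreover have "\<phi> x * exp (u x) * H1 u x \<ge> 0" using \<phi>_nonneg H1 True by simp
  ultimately show ?thesis
    using sum_pd_weighted_mc_flux[OF U u True \<phi>] by simp
next
  case False
  then have "x \<notin> K" using K(2) by auto
  then show ?thesis
    by (simp add: mc_energy_def \<phi>0 weighted_mc_flux_def pd_vanishing_outside[OF K(1)])
qed

text \<open>The divergence of the compactly supported field \<open>\<phi> e\<^sup>u Du / \<surd>(1 + |Du|\<^sup>2)\<close> integrates
  to zero.\<close>
lemma integral_mc_energy_le: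
  fixes u \<phi> :: "real^'n::finite \<Rightarrow> real"
  assumes U: "open U" and u: "C2_on U u" and u_le: "\<And>x. x \<in> U \<Longrightarrow> u x \<le> 0"
    and H1: "\<And>x. x \<in> U \<Longrightarrow> H1 u x \<ge> 0"
    and K: "compact K" "K \<subseteq> U" and \<phi>0: "\<And>x. x \<notin> K \<Longrightarrow> \<phi> x = 0" and \<phi>_nonneg: "\<And>x. \<phi> x \<ge> 0"
    and \<phi>: "\<And>x. \<phi> differentiable (at x)" "\<And>i. continuous_on UNIV (pd i \<phi>)"
    and grad_\<phi>: "\<And>x. norm (grad \<phi> x) \<le> \<Lambda>"
  shows "integrable lborel (mc_energy \<phi> u)" "integral\<^sup>L lborel (mc_energy \<phi> u) \<le> \<Lambda> * measure lborel K"
proof -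
  have closedK: "closed K" using K(1) by (rule compact_imp_closed)
  define g where "g x = (\<Sum>i\<in>UNIV. pd i (weighted_mc_flux U \<phi> u i) x) + \<Lambda> * indicator K x" for x
  note int_pdF = integral_pd_weighted_mc_flux[OF U u K \<phi>0 \<phi>]
  have g_int: "integrable lborel g"
    using emeasure_compact_finite[OF K(1)] closedK int_pdF(1)
    by (auto simp: g_def[abs_def] less_top intro!: integrable_real_indicator)
  have "integral\<^sup>L lborel g = \<Lambda> * measure lborel K"
    using emeasure_compact_finite[OF K(1)] closedK int_pdF
    by (simp add: g_def[abs_def] less_top Bochner_Integration.integral_sum)
  have energy_le: "mc_energy \<phi> u x \<le> g x" for x
    unfolding g_def
    by (rule mc_energy_le_sum_pd_weighted_mc_flux[OF U u u_le H1 closedK K(2) \<phi>0 \<phi>_nonneg \<phi>(1) grad_\<phi>])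
  have "continuous_on UNIV (mc_energy \<phi> u)"
    using continuous_on_mc_energy[OF _ u] \<phi>(1)
    by (intro continuous_on_vanishing_outside[OF U closedK K(2)])
      (auto simp: mc_energy_def \<phi>0 continuous_at_imp_continuous_on differentiable_imp_continuous_within)
  then have "mc_energy \<phi> u \<in> borel_measurable lborel"
    by (simp add: borel_measurable_continuous_onI)
  moreover have "AE x in lborel. norm (mc_energy \<phi> u x) \<le> norm (g x)"
  proof (rule AE_I2)
    fix x
    have "mc_energy \<phi> u x \<ge> 0" using \<phi>_nonneg[of x] by (simp add: mc_energy_def)
    then show "norm (mc_energy \<phi> u x) \<le> norm (g x)" using energy_le[of x] by simp
  qed
  ultimately show int: "integrable lborel (mc_energy \<phi> u)"
    by (rule Bochner_Integration.integrable_bound[OF g_int])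
  have "integral\<^sup>L lborel (mc_energy \<phi> u) \<le> integral\<^sup>L lborel g"
    using int g_int energy_le by (rule integral_mono)
  with \<open>integral\<^sup>L lborel g = \<Lambda> * measure lborel K\<close>
  show "integral\<^sup>L lborel (mc_energy \<phi> u) \<le> \<Lambda> * measure lborel K" by simp
qed

section \<open>Cutoff functions\<close>

lemma has_real_derivative_max_0_power2:
  "((\<lambda>s::real. (max 0 s)\<^sup>2) has_real_derivative 2 * max 0 s) (at s)"
proof -
  consider "s > 0" | "s < 0" | "s = 0" by linarith
  then show ?thesis
  proof cases
    case 1
    have "((\<lambda>s::real. s\<^sup>2) has_real_derivative 2 * s) (at s)"
      by (auto intro!: derivative_eq_intros)
    then have "((\<lambda>s::real. (max 0 s)\<^sup>2) has_real_derivative 2 * s) (at s)"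
      by (rule has_field_derivative_transform_within_open[of _ _ _ "{0<..}"]) (use 1 in auto)
    with 1 show ?thesis by simp
  next
    case 2
    have "((\<lambda>s::real. 0) has_real_derivative 0) (at s)" by simp
    then have "((\<lambda>s::real. (max 0 s)\<^sup>2) has_real_derivative 0) (at s)"
      by (rule has_field_derivative_transform_within_open[of _ _ _ "{..<0}"]) (use 2 in auto)
    with 2 show ?thesis by simp
  next
    case 3
    have "((\<lambda>h. (max 0 h)\<^sup>2 / h) \<longlongrightarrow> 0) (at (0::real))"
    proof (rule Lim_null_comparison)
      show "\<forall>\<^sub>F h in at 0. norm ((max 0 h)\<^sup>2 / h) \<le> \<bar>h\<bar>"
        by (intro always_eventually allI) (auto simp: power2_eq_square max_def)
      show "((\<lambda>h::real. \<bar>h\<bar>) \<longlongrightarrow> 0) (at 0)"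
        using tendsto_rabs[OF tendsto_ident_at[of "0::real" UNIV]] by simp
    qed
    then show ?thesis unfolding 3 DERIV_def by simp
  qed
qed

text \<open>Squaring the positive part makes the bump \<open>C\<^sup>1\<close>.\<close>
definition cutoff :: "real^'n::finite \<Rightarrow> real \<Rightarrow> real^'n \<Rightarrow> real" where
  "cutoff c R x = (max 0 (R\<^sup>2 - (x - c) \<bullet> (x - c)))\<^sup>2"

lemma has_derivative_cutoff:
  "(cutoff c R has_derivative
     (\<lambda>v. - 4 * max 0 (R\<^sup>2 - (x - c) \<bullet> (x - c)) * ((x - c) \<bullet> v))) (at x)"
proof -
  have "((\<lambda>x. R\<^sup>2 - (x - c) \<bullet> (x - c)) has_derivative (\<lambda>v. - (2 * ((x - c) \<bullet> v)))) (at x)"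
    by (auto intro!: derivative_eq_intros simp: inner_commute)
  from DERIV_compose_FDERIV[OF has_real_derivative_max_0_power2 this]
  show ?thesis unfolding cutoff_def[abs_def] by (simp add: algebra_simps)
qed

lemma cutoff_differentiable: "cutoff c R differentiable (at x)"
  using has_derivative_cutoff by (rule differentiableI)

lemma pd_cutoff: "pd i (cutoff c R) x = - 4 * max 0 (R\<^sup>2 - (x - c) \<bullet> (x - c)) * (x $ i - c $ i)"
  using pd_eq_derivative[OF has_derivative_cutoff, of i] by (simp add: inner_axis)

lemma continuous_on_pd_cutoff: "continuous_on S (pd i (cutoff c R))"
  unfolding pd_cutoff by (intro continuous_intros)

lemma cutoff_nonneg: "cutoff c R x \<ge> 0"
  by (simp add: cutoff_def)

lemma cutoff_vanishing_outside:
  assumes "R \<ge> 0" "x \<notin> cball c R"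
  shows "cutoff c R x = 0"
proof -
  have "R < norm (x - c)" using assms(2) by (simp add: dist_norm norm_minus_commute)
  then have "R\<^sup>2 < (x - c) \<bullet> (x - c)"
    using assms(1) by (simp add: power_strict_mono power2_norm_eq_inner[symmetric])
  then show ?thesis by (simp add: cutoff_def)
qed

lemma cutoff_ge:
  assumes "x \<in> ball c r" "0 \<le> r" "r \<le> R"
  shows "cutoff c R x \<ge> (R\<^sup>2 - r\<^sup>2)\<^sup>2"
proof -
  have "norm (x - c) < r" using assms(1) by (simp add: dist_norm norm_minus_commute)
  then have "(x - c) \<bullet> (x - c) \<le> r\<^sup>2"
    by (simp add: power_mono power2_norm_eq_inner[symmetric])
  moreover have "r\<^sup>2 \<le> R\<^sup>2" using assms(2,3) by (simp add: power_mono)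
  ultimately show ?thesis unfolding cutoff_def by (intro power_mono) auto
qed

lemma norm_grad_cutoff_le:
  assumes "R \<ge> 0"
  shows "norm (grad (cutoff c R) x) \<le> 4 * R ^ 3"
proof -
  define m where "m = max 0 (R\<^sup>2 - (x - c) \<bullet> (x - c))"
  have "grad (cutoff c R) x = (- 4 * m) *\<^sub>R (x - c)"
    by (simp add: grad_def pd_cutoff m_def vec_eq_iff)
  then have "norm (grad (cutoff c R) x) = 4 * m * norm (x - c)"
    by (simp add: m_def)
  also have "\<dots> \<le> 4 * R ^ 3"
  proof (cases "norm (x - c) \<le> R")
    case True
    have "m \<le> R\<^sup>2" by (simp add: m_def)
    with True assms have "m * norm (x - c) \<le> R\<^sup>2 * R" by (intro mult_mono) (auto simp: m_def)
    then show ?thesis by (simp add: power3_eq_cube power2_eq_square)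
  next
    case False
    then have "x \<notin> cball c R" by (simp add: dist_norm norm_minus_commute)
    then have "m = 0" using cutoff_vanishing_outside[OF assms] by (simp add: cutoff_def m_def)
    then show ?thesis using assms by simp
  qed
  finally show ?thesis .
qed

section \<open>Gradient of the truncation\<close>

lemma grad_norm_max_le:
  fixes u :: "real^'n::finite \<Rightarrow> real"
  assumes u: "u differentiable (at x)"
  shows "grad_norm (\<lambda>y. max (u y) c) x \<le> (if c \<le> u x then norm (grad u x) else 0)"
proof -
  have "isCont u x" using u by (rule differentiable_imp_continuous_within)
  then have u_tendsto: "(u \<longlongrightarrow> u x) (nhds x)"
    by (simp add: isCont_def tendsto_at_iff_tendsto_nhds)
  consider "c < u x" | "u x < c" | "u x = c" by linarith
  then show ?thesis
  proof cases
    case 1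
    then obtain S where S: "open S" "x \<in> S" "\<And>y. y \<in> S \<Longrightarrow> max (u y) c = u y"
      using order_tendstoD(1)[OF u_tendsto 1] unfolding eventually_nhds by force
    obtain D where "(u has_derivative D) (at x)" using u unfolding differentiable_def by blast
    then have "((\<lambda>y. max (u y) c) has_derivative D) (at x)"
      by (rule has_derivative_transform_within_open[OF _ S(1,2)]) (simp add: S(3))
    then have "(\<lambda>y. max (u y) c) differentiable (at x)" by (rule differentiableI)
    moreover have "pd k (\<lambda>y. max (u y) c) x = pd k u x" for k
      by (rule pd_cong_open[OF S(1,2)]) (rule S(3))
    ultimately show ?thesis using 1 by (simp add: grad_norm_def grad_def)
  next
    case 2
    then obtain S where S: "open S" "x \<in> S" "\<And>y. y \<in> S \<Longrightarrow> max (u y) c = c"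
      using order_tendstoD(2)[OF u_tendsto 2] unfolding eventually_nhds by force
    have "pd k (\<lambda>y. max (u y) c) x = pd k (\<lambda>_. c) x" for k
      by (rule pd_cong_open[OF S(1,2)]) (rule S(3))
    then show ?thesis using 2 by (simp add: grad_norm_def grad_def vec_eq_iff)
  next
    case 3
    have "grad (\<lambda>y. max (u y) c) x = 0" if "(\<lambda>y. max (u y) c) differentiable (at x)"
    proof -
      have "((\<lambda>y. max (u y) c) has_derivative frechet_derivative (\<lambda>y. max (u y) c) (at x)) (at x)"
        using that frechet_derivative_works by blast
      then have "frechet_derivative (\<lambda>y. max (u y) c) (at x) = (\<lambda>_. 0)"
        by (rule has_derivative_local_min) (use 3 in \<open>auto intro: always_eventually\<close>)
      then show ?thesis by (simp add: grad_def pd_def vec_eq_iff)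
    qed
    then show ?thesis by (simp add: grad_norm_def)
  qed
qed

lemma le_power2_div_sqrt_one_plus:
  fixes a :: real
  assumes "a \<ge> 0"
  shows "a \<le> a\<^sup>2 / sqrt (1 + a\<^sup>2) + 1"
proof -
  define W where "W = sqrt (1 + a\<^sup>2)"
  have "a \<le> W" unfolding W_def by (rule real_le_rsqrt) simp
  moreover have "W \<le> a + 1"
    unfolding W_def using assms by (intro real_le_lsqrt) (auto simp: power2_eq_square algebra_simps)
  moreover have "W > 0" unfolding W_def by (simp add: add_pos_nonneg)
  ultimately have "a * W \<le> a\<^sup>2 + W"
    using mult_left_mono[of W "a + 1" a] assms by (simp add: power2_eq_square algebra_simps)
  with \<open>W > 0\<close> show ?thesis unfolding W_def[symmetric] by (simp add: field_simps)
qed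

lemma grad_norm_truncation_le_mc_energy:
  fixes u \<phi> :: "real^'n::finite \<Rightarrow> real"
  assumes u: "u differentiable (at x)" "u x \<le> 0" and m: "0 < m" "m \<le> \<phi> x"
  shows "grad_norm (\<lambda>y. max (u y) (- t)) x \<le> exp t * (mc_energy \<phi> u x / m + 1)"
proof -
  define a where "a = norm (grad u x)"
  define W where "W = sqrt (1 + a\<^sup>2)"
  have "grad_norm (\<lambda>y. max (u y) (- t)) x \<le> (if - t \<le> u x then a else 0)"
    unfolding a_def by (rule grad_norm_max_le[OF u(1)])
  also have "\<dots> \<le> exp (u x + t) * a"
  proof (cases "- t \<le> u x")
    case True
    then have "1 * a \<le> exp (u x + t) * a" by (intro mult_right_mono) (auto simp: a_def)
    with True show ?thesis by simp
  qed (simp add: a_def)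
  also have "\<dots> = exp t * (exp (u x) * a)" by (simp add: exp_add)
  also have "exp (u x) * a \<le> exp (u x) * (a\<^sup>2 / W) + 1"
  proof -
    have "exp (u x) * a \<le> exp (u x) * (a\<^sup>2 / W + 1)"
      unfolding W_def by (intro mult_left_mono le_power2_div_sqrt_one_plus) (auto simp: a_def)
    moreover have "exp (u x) * (a\<^sup>2 / W + 1) = exp (u x) * (a\<^sup>2 / W) + exp (u x)"
      by (simp add: distrib_left)
    moreover have "exp (u x) \<le> 1" using u(2) by simp
    ultimately show ?thesis by linarith
  qed
  also have "exp (u x) * (a\<^sup>2 / W) \<le> mc_energy \<phi> u x / m"
  proof -
    have "m * (exp (u x) * (a\<^sup>2 / W)) \<le> \<phi> x * (exp (u x) * (a\<^sup>2 / W))"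
      using m(2) by (rule mult_right_mono) (simp add: W_def)
    also have "\<dots> = mc_energy \<phi> u x" by (simp add: mc_energy_def a_def W_def)
    finally show ?thesis using m(1) by (simp add: field_simps)
  qed
  finally show ?thesis by (simp add: mult_left_mono)
qed

text \<open>The constants come from \<open>cutoff c (2\<delta>)\<close>: its gradient is at most \<open>4 (2\<delta>)\<^sup>3\<close>, and it is
  at least \<open>9\<delta>\<^sup>4\<close> on \<open>ball c \<delta>\<close>.\<close>
definition truncated_gradient_bound :: "real^'n::finite \<Rightarrow> real \<Rightarrow> real \<Rightarrow> real" where
  "truncated_gradient_bound c \<delta> t = exp t *
     (4 * (2 * \<delta>) ^ 3 * measure lborel (cball c (2 * \<delta>)) / (9 * \<delta> ^ 4) + measure lborel (ball c \<delta>))"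

lemma truncated_gradient_bound_nonneg: "\<delta> > 0 \<Longrightarrow> truncated_gradient_bound c \<delta> t \<ge> 0"
  unfolding truncated_gradient_bound_def by simp

lemma truncated_gradient_local_estimate:
  fixes u :: "real^'n::finite \<Rightarrow> real"
  assumes U: "open U" and u: "C2_on U u" and u_le: "\<And>x. x \<in> U \<Longrightarrow> u x \<le> 0"
    and H1: "\<And>x. x \<in> U \<Longrightarrow> H1 u x \<ge> 0" and \<delta>: "\<delta> > 0" and ball: "cball c (2 * \<delta>) \<subseteq> U"
  shows "\<exists>B. integrable lborel B \<and> (\<forall>x. B x \<ge> 0)
    \<and> (\<forall>x\<in>ball c \<delta>. grad_norm (\<lambda>y. max (u y) (- t)) x \<le> B x)
    \<and> integral\<^sup>L lborel B \<le> truncated_gradient_bound c \<delta> t"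
proof -
  define B where "B x = exp t * (mc_energy (cutoff c (2 * \<delta>)) u x / (9 * \<delta> ^ 4) + indicator (ball c \<delta>) x)" for x
  have \<phi>0: "cutoff c (2 * \<delta>) x = 0" if "x \<notin> cball c (2 * \<delta>)" for x
    using \<delta> that by (simp add: cutoff_vanishing_outside)
  have grad_\<phi>: "norm (grad (cutoff c (2 * \<delta>)) x) \<le> 4 * (2 * \<delta>) ^ 3" for x
    by (rule norm_grad_cutoff_le) (use \<delta> in simp)
  note E = integral_mc_energy_le[OF U u u_le H1 compact_cball ball \<phi>0
      cutoff_nonneg cutoff_differentiable continuous_on_pd_cutoff grad_\<phi>]
  have ball_int: "integrable lborel (indicator (ball c \<delta>) :: _ \<Rightarrow> real)"
    using emeasure_bounded_finite[OF bounded_ball] by (intro integrable_real_indicator) (auto simp: less_top)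
  have "integrable lborel B" unfolding B_def[abs_def] using E(1) ball_int by simp
  moreover have "B x \<ge> 0" for x
    unfolding B_def using \<delta> cutoff_nonneg[of c "2 * \<delta>" x] by (simp add: mc_energy_def)
  moreover have "grad_norm (\<lambda>y. max (u y) (- t)) x \<le> B x" if x: "x \<in> ball c \<delta>" for x
  proof -
    have xU: "x \<in> U" using x ball \<delta> by (auto simp: subset_iff)
    have "9 * \<delta> ^ 4 \<le> cutoff c (2 * \<delta>) x"
      using cutoff_ge[OF x, of "2 * \<delta>"] \<delta> by (simp add: power2_eq_square power4_eq_xxxx)
    with \<delta> show ?thesis
      using grad_norm_truncation_le_mc_energy[OF C2_on_differentiable_at[OF u U xU] u_le[OF xU]] x
      by (simp add: B_def)
  qed
  moreover have "integral\<^sup>L lborel B \<le> truncated_gradient_bound c \<delta> t"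
    using E ball_int \<delta>
    by (simp add: B_def[abs_def] truncated_gradient_bound_def divide_right_mono)
  ultimately show ?thesis by blast
qed

section \<open>Covering argument\<close>

lemma compact_subset_finite_ball_cover:
  fixes U S :: "'a::metric_space set"
  assumes "open U" "compact S" "S \<subseteq> U"
  obtains C \<delta> where "finite C" "\<And>c. c \<in> C \<Longrightarrow> \<delta> c > 0 \<and> cball c (2 * \<delta> c) \<subseteq> U"
    "S \<subseteq> (\<Union>c\<in>C. ball c (\<delta> c))"
proof -
  have "\<forall>x\<in>U. \<exists>d. d > 0 \<and> cball x (2 * d) \<subseteq> U"
  proof
    fix x assume "x \<in> U"
    then obtain e where "e > 0" "cball x e \<subseteq> U" using assms(1) open_contains_cball by blast
    then show "\<exists>d. d > 0 \<and> cball x (2 * d) \<subseteq> U" by (intro exI[of _ "e / 2"]) auto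
  qed
  from bchoice[OF this] obtain \<delta> where \<delta>: "\<forall>x\<in>U. \<delta> x > 0 \<and> cball x (2 * \<delta> x) \<subseteq> U" ..
  have "S \<subseteq> (\<Union>c\<in>S. ball c (\<delta> c))" using \<delta> assms(3) by force
  then obtain C where C: "C \<subseteq> S" "finite C" "S \<subseteq> (\<Union>c\<in>C. ball c (\<delta> c))"
    by (rule compactE_image[OF assms(2) open_ball])
  moreover have "\<delta> c > 0 \<and> cball c (2 * \<delta> c) \<subseteq> U" if "c \<in> C" for c
    using \<delta> C(1) assms(3) that by blast
  ultimately show ?thesis by (intro that[of C \<delta>]) auto
qed

lemma nn_integral_le_sum_local_majorants:
  fixes f :: "'a::euclidean_space \<Rightarrow> real"
  assumes "finite C" "A \<subseteq> (\<Union>c\<in>C. V c)"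
    and "\<And>c. c \<in> C \<Longrightarrow> integrable lborel (B c)" "\<And>c x. c \<in> C \<Longrightarrow> B c x \<ge> 0"
    and "\<And>c x. c \<in> C \<Longrightarrow> x \<in> V c \<Longrightarrow> f x \<le> B c x"
  shows "(\<integral>\<^sup>+x\<in>A. ennreal (f x) \<partial>lebesgue) \<le> ennreal (\<Sum>c\<in>C. integral\<^sup>L lborel (B c))"
proof -
  have "ennreal (f x) * indicator A x \<le> ennreal (\<Sum>c\<in>C. B c x)" for x
  proof (cases "x \<in> A")
    case True
    then obtain c where c: "c \<in> C" "x \<in> V c" using assms(2) by blast
    then have "f x \<le> B c x" by (rule assms(5))
    also have "\<dots> \<le> (\<Sum>c\<in>C. B c x)" using c assms(1,4) by (intro member_le_sum) auto
    finally show ?thesis using True by (simp add: ennreal_leI)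
  qed simp
  then have "(\<integral>\<^sup>+x\<in>A. ennreal (f x) \<partial>lebesgue) \<le> (\<integral>\<^sup>+x. ennreal (\<Sum>c\<in>C. B c x) \<partial>lebesgue)"
    by (intro nn_integral_mono) auto
  also have "\<dots> = (\<integral>\<^sup>+x. ennreal (\<Sum>c\<in>C. B c x) \<partial>lborel)"
    using assms(3) by (intro nn_integral_completion)
  also have "\<dots> = ennreal (\<Sum>c\<in>C. integral\<^sup>L lborel (B c))"
    using assms(3,4) by (subst nn_integral_eq_integral) (auto intro!: AE_I2 sum_nonneg)
  finally show ?thesis .
qed

lemma nn_integral_truncated_gradient_le:
  fixes u :: "real^'n::finite \<Rightarrow> real"
  assumes U: "open U" and u: "C2_on U u" and u_le: "\<And>x. x \<in> U \<Longrightarrow> u x \<le> 0"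
    and H1: "\<And>x. x \<in> U \<Longrightarrow> H1 u x \<ge> 0"
    and C: "finite C" "\<And>c. c \<in> C \<Longrightarrow> \<delta> c > 0 \<and> cball c (2 * \<delta> c) \<subseteq> U"
    and A: "A \<subseteq> (\<Union>c\<in>C. ball c (\<delta> c))"
  shows "(\<integral>\<^sup>+x\<in>A. ennreal (grad_norm (\<lambda>y. max (u y) (- t)) x) \<partial>lebesgue)
    \<le> ennreal (\<Sum>c\<in>C. truncated_gradient_bound c (\<delta> c) t)"
proof -
  have "\<forall>c\<in>C. \<exists>B. integrable lborel B \<and> (\<forall>x. B x \<ge> 0)
      \<and> (\<forall>x\<in>ball c (\<delta> c). grad_norm (\<lambda>y. max (u y) (- t)) x \<le> B x)
      \<and> integral\<^sup>L lborel B \<le> truncated_gradient_bound c (\<delta> c) t"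
    using C(2) by (blast intro: truncated_gradient_local_estimate[OF U u u_le H1])
  from bchoice[OF this] obtain B where B: "\<forall>c\<in>C. integrable lborel (B c) \<and> (\<forall>x. B c x \<ge> 0)
      \<and> (\<forall>x\<in>ball c (\<delta> c). grad_norm (\<lambda>y. max (u y) (- t)) x \<le> B c x)
      \<and> integral\<^sup>L lborel (B c) \<le> truncated_gradient_bound c (\<delta> c) t" ..
  have "(\<integral>\<^sup>+x\<in>A. ennreal (grad_norm (\<lambda>y. max (u y) (- t)) x) \<partial>lebesgue)
      \<le> ennreal (\<Sum>c\<in>C. integral\<^sup>L lborel (B c))"
    using B by (intro nn_integral_le_sum_local_majorants[OF C(1) A]) auto
  also have "\<dots> \<le> ennreal (\<Sum>c\<in>C. truncated_gradient_bound c (\<delta> c) t)"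
    using B by (intro ennreal_leI sum_mono) blast
  finally show ?thesis .
qed

theorem theorem3p1:
  fixes \<Omega> \<omega> :: "(real^'n::finite) set" and t :: real
  assumes "open \<Omega>" "connected \<Omega>" "\<Omega> \<noteq> {}"
    and "open \<omega>" "compact (closure \<omega>)" "closure \<omega> \<subseteq> \<Omega>"
    and "t > 0"
  shows "\<exists>C>0. \<forall>u :: real^'n \<Rightarrow> real.
           C2_on \<Omega> u \<and> (\<forall>x\<in>\<Omega>. u x \<le> 0) \<and> H1_subharmonic \<Omega> (\<lambda>x. ereal (u x)) \<longrightarrow>
           (\<integral>\<^sup>+x\<in>\<omega>. ennreal (grad_norm (\<lambda>y. max (u y) (- t)) x) \<partial>lebesgue) \<le> ennreal C"
proof -
  obtain Cs \<delta> where Cs: "finite Cs" "\<And>c. c \<in> Cs \<Longrightarrow> \<delta> c > 0 \<and> cball c (2 * \<delta> c) \<subseteq> \<Omega>"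
    "closure \<omega> \<subseteq> (\<Union>c\<in>Cs. ball c (\<delta> c))"
    using compact_subset_finite_ball_cover[OF assms(1,5,6)] by metis
  define M where "M = (\<Sum>c\<in>Cs. truncated_gradient_bound c (\<delta> c) t)"
  have "M \<ge> 0" unfolding M_def using Cs(2) by (intro sum_nonneg truncated_gradient_bound_nonneg) blast
  moreover have "(\<integral>\<^sup>+x\<in>\<omega>. ennreal (grad_norm (\<lambda>y. max (u y) (- t)) x) \<partial>lebesgue) \<le> ennreal (M + 1)"
    if "C2_on \<Omega> u" "\<forall>x\<in>\<Omega>. u x \<le> 0" "H1_subharmonic \<Omega> (\<lambda>x. ereal (u x))" for u
  proof -
    have "(\<integral>\<^sup>+x\<in>\<omega>. ennreal (grad_norm (\<lambda>y. max (u y) (- t)) x) \<partial>lebesgue) \<le> ennreal M"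
      unfolding M_def using that Cs closure_subset[of \<omega>]
      by (intro nn_integral_truncated_gradient_le[OF assms(1)] H1_nonneg_if_H1_subharmonic[OF assms(1)])
        auto
    also have "\<dots> \<le> ennreal (M + 1)" by (rule ennreal_leI) simp
    finally show ?thesis .
  qed
  ultimately show ?thesis by (intro exI[of _ "M + 1"]) auto
qed

end
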